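(* Consider the following scheduling market. There are $d$ machine types; $M_k$ is the finite set of machines of type $k$, and the goods are all machines $(j,k)$, $j\in M_k$, each of supply $1$. Each agent (job) $i\in A$ has requirements $r_{ik}\ge0$ and covering constraints $\sum_{j\in M_k}x_{ijk}\ge r_{ik}$ for all $k\in[d]$, $x_{ijk}\ge0$. All agents face the same delay $d_{jk}\ge0$ on machine $j$ of type $k$. Assume $|M_k|\ge\sum_{i\in A}r_{ik}$ for every $k$. Then this market satisfies extensibility.
   Context: An allocation $X\ge0$ is supply respecting if each good is allocated in total at most $1$. For a set of agents $S$, an allocation $X$ is jointly optimal for $S$ if it satisfies the covering constraints of all $i\in S$, is supply respecting, and minimizes the total delay $\sum_{i\in S}\sum_{k}\sum_{j\in M_k}d_{jk}x_{ijk}$ among such allocations. A market satisfies extensibility if for every $S\subset A$, every $X$ jointly optimal for $S$ and every $i\in A\setminus S$, there is $X'$ jointly optimal for $S\cup\{i\}$ such that every agent $i'\in S$ has the same delay $\sum_{k,j}d_{jk}x'_{i'jk}=\sum_{k,j}d_{jk}x_{i'jk}$. *)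

theory Defs
  imports Complex_Main
begin

text \<open>Only the entries with i in the considered agent set S, k < d and j in M k matter.
r i k is the requirement of agent i for type k, dl j k the delay of machine j of type k.\<close>

definition supply_respecting ::
  "nat \<Rightarrow> (nat \<Rightarrow> 'm set) \<Rightarrow> 'a set \<Rightarrow> ('a \<Rightarrow> 'm \<Rightarrow> nat \<Rightarrow> real) \<Rightarrow> bool" where
  "supply_respecting d M S X \<longleftrightarrow>
     (\<forall>k<d. \<forall>j\<in>M k. (\<Sum>i\<in>S. X i j k) \<le> 1)"

definition nonneg_alloc ::
  "nat \<Rightarrow> (nat \<Rightarrow> 'm set) \<Rightarrow> 'a set \<Rightarrow> ('a \<Rightarrow> 'm \<Rightarrow> nat \<Rightarrow> real) \<Rightarrow> bool" where
  "nonneg_alloc d M S X \<longleftrightarrow> (\<forall>i\<in>S. \<forall>k<d. \<forall>j\<in>M k. 0 \<le> X i j k)"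

definition satisfies_covering ::
  "nat \<Rightarrow> (nat \<Rightarrow> 'm set) \<Rightarrow> ('a \<Rightarrow> nat \<Rightarrow> real) \<Rightarrow> 'a set \<Rightarrow> ('a \<Rightarrow> 'm \<Rightarrow> nat \<Rightarrow> real) \<Rightarrow> bool" where
  "satisfies_covering d M r S X \<longleftrightarrow> (\<forall>i\<in>S. \<forall>k<d. (\<Sum>j\<in>M k. X i j k) \<ge> r i k)"

definition feasible_for ::
  "nat \<Rightarrow> (nat \<Rightarrow> 'm set) \<Rightarrow> ('a \<Rightarrow> nat \<Rightarrow> real) \<Rightarrow> 'a set \<Rightarrow> ('a \<Rightarrow> 'm \<Rightarrow> nat \<Rightarrow> real) \<Rightarrow> bool" where
  "feasible_for d M r S X \<longleftrightarrow>
     nonneg_alloc d M S X \<and> satisfies_covering d M r S X \<and> supply_respecting d M S X"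

definition agent_delay ::
  "nat \<Rightarrow> (nat \<Rightarrow> 'm set) \<Rightarrow> ('m \<Rightarrow> nat \<Rightarrow> real) \<Rightarrow> ('a \<Rightarrow> 'm \<Rightarrow> nat \<Rightarrow> real) \<Rightarrow> 'a \<Rightarrow> real" where
  "agent_delay d M dl X i = (\<Sum>k<d. \<Sum>j\<in>M k. dl j k * X i j k)"

definition total_delay ::
  "nat \<Rightarrow> (nat \<Rightarrow> 'm set) \<Rightarrow> ('m \<Rightarrow> nat \<Rightarrow> real) \<Rightarrow> 'a set \<Rightarrow> ('a \<Rightarrow> 'm \<Rightarrow> nat \<Rightarrow> real) \<Rightarrow> real" where
  "total_delay d M dl S X = (\<Sum>i\<in>S. \<Sum>k<d. \<Sum>j\<in>M k. dl j k * X i j k)"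

definition jointly_optimal ::
  "nat \<Rightarrow> (nat \<Rightarrow> 'm set) \<Rightarrow> ('a \<Rightarrow> nat \<Rightarrow> real) \<Rightarrow> ('m \<Rightarrow> nat \<Rightarrow> real) \<Rightarrow> 'a set
     \<Rightarrow> ('a \<Rightarrow> 'm \<Rightarrow> nat \<Rightarrow> real) \<Rightarrow> bool" where
  "jointly_optimal d M r dl S X \<longleftrightarrow>
     feasible_for d M r S X \<and>
     (\<forall>Y. feasible_for d M r S Y \<longrightarrow> total_delay d M dl S X \<le> total_delay d M dl S Y)"

definition extensibility ::
  "nat \<Rightarrow> (nat \<Rightarrow> 'm set) \<Rightarrow> ('a \<Rightarrow> nat \<Rightarrow> real) \<Rightarrow> ('m \<Rightarrow> nat \<Rightarrow> real) \<Rightarrow> 'a set \<Rightarrow> bool" where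
  "extensibility d M r dl A \<longleftrightarrow>
     (\<forall>S X i. S \<subseteq> A \<longrightarrow> jointly_optimal d M r dl S X \<longrightarrow> i \<in> A - S \<longrightarrow>
        (\<exists>X'. jointly_optimal d M r dl (insert i S) X' \<and>
              (\<forall>i'\<in>S. agent_delay d M dl X' i' = agent_delay d M dl X i')))"

end

theory Submission
  imports Defs
begin

(*
  Delays do not depend on the agent, so the total delay only depends on the aggregate load of
  every machine, and the problem splits into one fractional knapsack per machine type: the
  optimal load fills the machines in order of increasing delay up to a threshold t, and its
  optimality is certified by the dual value t R + sum_j min 0 (d_j - t).  A jointly optimal
  allocation for S therefore attains this bound on every type, and by complementary slackness
  its load saturates all machines below the threshold and leaves those above it empty.  Trimming
  every agent of S to exactly its requirement keeps its delay, and the new agent is then placed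
  greedily into the remaining capacity, again by increasing delay; the combined load is a
  threshold load, hence optimal, while the old agents keep their delays.
*)

(* Dual value of  min sum_j dl j * v j  s.t.  sum_j v j >= R, 0 <= v <= 1  at multiplier t of the
   covering constraint: threshold_bound_le_delay is weak duality, delay_eq_threshold_bound_iff
   complementary slackness. *)
definition threshold_bound :: "'j set \<Rightarrow> ('j \<Rightarrow> real) \<Rightarrow> real \<Rightarrow> real \<Rightarrow> real" where
  "threshold_bound J dl R t = t * R + (\<Sum>j\<in>J. min 0 (dl j - t))"

definition threshold_fill :: "'j set \<Rightarrow> ('j \<Rightarrow> real) \<Rightarrow> ('j \<Rightarrow> real) \<Rightarrow> real \<Rightarrow> ('j \<Rightarrow> real) \<Rightarrow> bool" where
  "threshold_fill J dl c t w \<longleftrightarrow> (\<forall>j\<in>J. (dl j < t \<longrightarrow> w j = c j) \<and> (t < dl j \<longrightarrow> w j = 0))"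

lemma threshold_excess_nonneg:
  fixes a v :: real
  assumes "0 \<le> v" "v \<le> 1"
  shows "0 \<le> a * v - min 0 a"
proof (cases "a < 0")
  case True
  then have "a * 1 \<le> a * v" using assms by (intro mult_left_mono_neg) auto
  then show ?thesis using True by simp
qed (use assms in simp)

lemma threshold_excess_eq_0_iff:
  fixes a v :: real
  shows "a * v - min 0 a = 0 \<longleftrightarrow> (a < 0 \<longrightarrow> v = 1) \<and> (0 < a \<longrightarrow> v = 0)"
proof (cases a "0::real" rule: linorder_cases)
  case less
  then have "a * v - min 0 a = a * (v - 1)" by (simp add: algebra_simps)
  then show ?thesis using less by simp
qed simp_all

lemma delay_minus_threshold_bound:
  "(\<Sum>j\<in>J. dl j * v j) - threshold_bound J dl R t
     = (\<Sum>j\<in>J. (dl j - t) * v j - min 0 (dl j - t)) + t * (sum v J - R)"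
  by (simp add: threshold_bound_def sum_subtractf sum.distrib sum_distrib_left algebra_simps)

lemma threshold_bound_le_delay:
  assumes "\<forall>j\<in>J. 0 \<le> v j \<and> v j \<le> 1" "R \<le> sum v J" "0 \<le> t"
  shows "threshold_bound J dl R t \<le> (\<Sum>j\<in>J. dl j * v j)"
proof -
  have "0 \<le> (\<Sum>j\<in>J. (dl j - t) * v j - min 0 (dl j - t))"
    using assms(1) by (intro sum_nonneg threshold_excess_nonneg) auto
  moreover have "0 \<le> t * (sum v J - R)" using assms(2,3) by simp
  ultimately show ?thesis using delay_minus_threshold_bound[of dl v J R t] by linarith
qed

lemma delay_eq_threshold_bound_iff:
  assumes "finite J" "\<forall>j\<in>J. 0 \<le> v j \<and> v j \<le> 1" "R \<le> sum v J" "0 \<le> t"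
  shows "(\<Sum>j\<in>J. dl j * v j) = threshold_bound J dl R t
     \<longleftrightarrow> threshold_fill J dl (\<lambda>_. 1) t v \<and> (0 < t \<longrightarrow> sum v J = R)"
proof -
  define e where "e j = (dl j - t) * v j - min 0 (dl j - t)" for j
  have e_nonneg: "0 \<le> e j" if "j \<in> J" for j
    using assms(2) that unfolding e_def by (intro threshold_excess_nonneg) auto
  have "0 \<le> sum e J" using e_nonneg by (rule sum_nonneg)
  moreover have "0 \<le> t * (sum v J - R)" using assms(3,4) by simp
  moreover have "(\<Sum>j\<in>J. dl j * v j) - threshold_bound J dl R t = sum e J + t * (sum v J - R)"
    unfolding e_def by (rule delay_minus_threshold_bound)
  ultimately have "(\<Sum>j\<in>J. dl j * v j) = threshold_bound J dl R t
      \<longleftrightarrow> sum e J = 0 \<and> t * (sum v J - R) = 0"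
    by linarith
  also have "\<dots> \<longleftrightarrow> (\<forall>j\<in>J. e j = 0) \<and> (0 < t \<longrightarrow> sum v J = R)"
    using sum_nonneg_eq_0_iff[OF assms(1) e_nonneg] assms(4) by auto
  also have "(\<forall>j\<in>J. e j = 0) \<longleftrightarrow> threshold_fill J dl (\<lambda>_. 1) t v"
    unfolding e_def threshold_excess_eq_0_iff threshold_fill_def by auto
  finally show ?thesis .
qed

(* Fractional greedy: fill the machine of least delay first. *)
lemma threshold_fill_exists:
  fixes dl c :: "'j \<Rightarrow> real"
  assumes "finite J" "\<forall>j\<in>J. 0 \<le> c j" "0 \<le> R" "R \<le> sum c J"
  shows "\<exists>w t. (\<forall>j\<in>J. 0 \<le> w j \<and> w j \<le> c j) \<and> threshold_fill J dl c t w \<and> sum w J = R"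
  using assms
proof (induction J arbitrary: R rule: finite_psubset_induct)
  case (psubset J)
  show ?case
  proof (cases "J = {}")
    case True
    then show ?thesis using psubset.prems by (auto simp: threshold_fill_def)
  next
    case False
    have "Min (dl ` J) \<in> dl ` J" using psubset.hyps False by simp
    then obtain a where a: "a \<in> J" and "dl a = Min (dl ` J)" by auto
    then have a_min: "\<forall>j\<in>J. dl a \<le> dl j" using psubset.hyps by simp
    show ?thesis
    proof (cases "R \<le> c a")
      case True
      let ?w = "\<lambda>j. if j = a then R else 0"
      have "threshold_fill J dl c (dl a) ?w"
        using a_min by (auto simp: threshold_fill_def)
      then show ?thesis
        using True a psubset.prems psubset.hyps by (intro exI[of _ ?w] exI[of _ "dl a"]) auto
    next
      case False
      have split_a: "sum f J = f a + sum f (J - {a})" for f :: "'j \<Rightarrow> real"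
        using a psubset.hyps by (simp add: sum.remove)
      obtain w t where w: "\<forall>j\<in>J - {a}. 0 \<le> w j \<and> w j \<le> c j"
        and fill: "threshold_fill (J - {a}) dl c t w" and sum_w: "sum w (J - {a}) = R - c a"
        using psubset.IH[of "J - {a}" "R - c a"] a False psubset.prems split_a[of c] by auto
      let ?w = "w(a := c a)" and ?t = "max t (dl a)"
      have "threshold_fill J dl c ?t ?w"
        unfolding threshold_fill_def
      proof
        fix j assume "j \<in> J"
        then show "(dl j < ?t \<longrightarrow> ?w j = c j) \<and> (?t < dl j \<longrightarrow> ?w j = 0)"
          using fill a_min unfolding threshold_fill_def by (cases "j = a") auto
      qed
      moreover have "sum ?w J = R"
        using split_a[of ?w] sum_w by simp
      moreover have "\<forall>j\<in>J. 0 \<le> ?w j \<and> ?w j \<le> c j"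
        using w a psubset.prems by auto
      ultimately show ?thesis by blast
    qed
  qed
qed

lemma threshold_fill_extend:
  assumes "finite J" "\<forall>j\<in>J. 0 \<le> y j \<and> y j \<le> 1" "threshold_fill J dl (\<lambda>_. 1) t y"
    "0 \<le> \<rho>" "sum y J + \<rho> \<le> card J"
  shows "\<exists>z \<tau>. t \<le> \<tau> \<and> (\<forall>j\<in>J. 0 \<le> z j \<and> z j + y j \<le> 1) \<and> sum z J = \<rho>
           \<and> threshold_fill J dl (\<lambda>_. 1) \<tau> (\<lambda>j. z j + y j)"
proof -
  have "\<rho> \<le> (\<Sum>j\<in>J. 1 - y j)" using assms(5) by (simp add: sum_subtractf)
  then obtain z s where z: "\<forall>j\<in>J. 0 \<le> z j \<and> z j \<le> 1 - y j"
    and z_fill: "threshold_fill J dl (\<lambda>j. 1 - y j) s z" and sum_z: "sum z J = \<rho>"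
    using threshold_fill_exists[OF assms(1), of "\<lambda>j. 1 - y j" \<rho> dl] assms(2,4) by auto
  have "threshold_fill J dl (\<lambda>_. 1) (max t s) (\<lambda>j. z j + y j)"
    unfolding threshold_fill_def
  proof (intro ballI conjI impI)
    fix j assume j: "j \<in> J"
    show "z j + y j = 1" if "dl j < max t s"
    proof (cases "dl j < s")
      case False
      then have "y j = 1" using that j assms(3) by (auto simp: threshold_fill_def)
      then show ?thesis using z j by force
    qed (use z_fill j in \<open>auto simp: threshold_fill_def\<close>)
    show "z j + y j = 0" if "max t s < dl j"
      using that j assms(3) z_fill by (auto simp: threshold_fill_def)
  qed
  then show ?thesis using z sum_z by (intro exI[of _ z] exI[of _ "max t s"]) auto
qed

lemma rescale_to_sum:
  fixes x :: "'j \<Rightarrow> real"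
  assumes "finite J" "\<forall>j\<in>J. 0 \<le> x j" "0 \<le> \<rho>" "\<rho> \<le> sum x J"
  defines "x' \<equiv> \<lambda>j. x j * (\<rho> / sum x J)"
  shows "\<forall>j\<in>J. 0 \<le> x' j \<and> x' j \<le> x j" and "sum x' J = \<rho>"
    and "sum x J = \<rho> \<Longrightarrow> \<forall>j\<in>J. x' j = x j"
proof -
  have ratio: "0 \<le> \<rho> / sum x J" "\<rho> / sum x J \<le> 1"
    using assms(3,4) by (auto simp: divide_le_eq_1)
  show "\<forall>j\<in>J. 0 \<le> x' j \<and> x' j \<le> x j"
    using ratio assms(2) unfolding x'_def by (auto simp: mult_left_le simp del: times_divide_eq_right)
  have "sum x' J = sum x J * (\<rho> / sum x J)"
    unfolding x'_def by (rule sum_distrib_right[symmetric])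
  then show "sum x' J = \<rho>" using assms(3,4) by (cases "sum x J = 0") auto
  assume "sum x J = \<rho>"
  then show "\<forall>j\<in>J. x' j = x j"
    using sum_nonneg_eq_0_iff[OF assms(1)] assms(2) unfolding x'_def by (cases "\<rho> = 0") auto
qed

definition single_type_feasible :: "'j set \<Rightarrow> ('a \<Rightarrow> real) \<Rightarrow> 'a set \<Rightarrow> ('a \<Rightarrow> 'j \<Rightarrow> real) \<Rightarrow> bool" where
  "single_type_feasible J r S X \<longleftrightarrow>
     (\<forall>i\<in>S. \<forall>j\<in>J. 0 \<le> X i j) \<and> (\<forall>i\<in>S. r i \<le> sum (X i) J) \<and> (\<forall>j\<in>J. (\<Sum>i\<in>S. X i j) \<le> 1)"

definition attains_threshold_bound ::
  "'j set \<Rightarrow> ('j \<Rightarrow> real) \<Rightarrow> ('a \<Rightarrow> real) \<Rightarrow> 'a set \<Rightarrow> ('a \<Rightarrow> 'j \<Rightarrow> real) \<Rightarrow> bool" where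
  "attains_threshold_bound J dl r S X \<longleftrightarrow> single_type_feasible J r S X \<and>
     (\<exists>t\<ge>0. (\<Sum>j\<in>J. dl j * (\<Sum>i\<in>S. X i j)) = threshold_bound J dl (sum r S) t)"

lemma single_type_feasible_load:
  assumes "single_type_feasible J r S X"
  shows "\<forall>j\<in>J. 0 \<le> (\<Sum>i\<in>S. X i j) \<and> (\<Sum>i\<in>S. X i j) \<le> 1"
    and "sum r S \<le> (\<Sum>j\<in>J. \<Sum>i\<in>S. X i j)"
proof -
  show "\<forall>j\<in>J. 0 \<le> (\<Sum>i\<in>S. X i j) \<and> (\<Sum>i\<in>S. X i j) \<le> 1"
    using assms unfolding single_type_feasible_def by (auto intro: sum_nonneg)
  have "sum r S \<le> (\<Sum>i\<in>S. \<Sum>j\<in>J. X i j)"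
    using assms unfolding single_type_feasible_def by (intro sum_mono) auto
  also have "\<dots> = (\<Sum>j\<in>J. \<Sum>i\<in>S. X i j)" by (rule sum.swap)
  finally show "sum r S \<le> (\<Sum>j\<in>J. \<Sum>i\<in>S. X i j)" .
qed

lemma threshold_bound_le_single_type_delay:
  assumes "single_type_feasible J r S X" "0 \<le> t"
  shows "threshold_bound J dl (sum r S) t \<le> (\<Sum>j\<in>J. dl j * (\<Sum>i\<in>S. X i j))"
  using single_type_feasible_load[OF assms(1)] assms(2) by (intro threshold_bound_le_delay) auto

(* Shrinking every share to exactly r i keeps all agent delays: for t > 0 the covering constraints
   are already tight, and machines of delay above t carry no load. *)
lemma threshold_allocation_rescale:
  assumes "finite S" "finite J" "\<forall>j\<in>J. 0 \<le> dl j" "\<forall>i\<in>S. 0 \<le> r i"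
    and feasible: "single_type_feasible J r S X"
    and fill: "threshold_fill J dl (\<lambda>_. 1) t (\<lambda>j. \<Sum>i\<in>S. X i j)"
    and tight: "0 < t \<longrightarrow> (\<Sum>j\<in>J. \<Sum>i\<in>S. X i j) = sum r S"
  shows "\<exists>X0. single_type_feasible J r S X0 \<and> (\<forall>i\<in>S. sum (X0 i) J = r i)
           \<and> (\<forall>i\<in>S. (\<Sum>j\<in>J. dl j * X0 i j) = (\<Sum>j\<in>J. dl j * X i j))
           \<and> threshold_fill J dl (\<lambda>_. 1) t (\<lambda>j. \<Sum>i\<in>S. X0 i j)"
proof -
  have X_nonneg: "\<forall>i\<in>S. \<forall>j\<in>J. 0 \<le> X i j" and cover: "\<forall>i\<in>S. r i \<le> sum (X i) J"
    using feasible unfolding single_type_feasible_def by auto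
  define X0 where "X0 i j = X i j * (r i / sum (X i) J)" for i j
  have X0_le: "\<forall>j\<in>J. 0 \<le> X0 i j \<and> X0 i j \<le> X i j" and X0_sum: "sum (X0 i) J = r i"
    and X0_eq: "sum (X i) J = r i \<Longrightarrow> \<forall>j\<in>J. X0 i j = X i j" if "i \<in> S" for i
    using rescale_to_sum[OF assms(2), of "X i" "r i"] X_nonneg cover assms(4) that
    unfolding X0_def by auto
  have keep: "X0 i j = X i j" if i: "i \<in> S" and j: "j \<in> J" and "0 < t \<or> t < dl j" for i j
    using that(3)
  proof
    assume "0 < t"
    then have "(\<Sum>i\<in>S. sum (X i) J) = sum r S" using tight sum.swap[of X J S] by simp
    then have "sum (X i) J = r i"
      using sum_mono_inv[of r S "\<lambda>i. sum (X i) J"] cover i assms(1) by auto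
    then show ?thesis using X0_eq i j by blast
  next
    assume "t < dl j"
    then have "(\<Sum>i\<in>S. X i j) = 0" using fill j by (simp add: threshold_fill_def)
    then have "X i j = 0" using sum_nonneg_eq_0_iff[OF assms(1), of "\<lambda>i. X i j"] X_nonneg i j by auto
    then show ?thesis using X0_le[OF i] j by force
  qed
  have "(\<Sum>i\<in>S. X0 i j) \<le> (\<Sum>i\<in>S. X i j)" if "j \<in> J" for j
    using X0_le that by (intro sum_mono) auto
  then have "single_type_feasible J r S X0"
    using feasible X0_le X0_sum unfolding single_type_feasible_def by force
  moreover have "(\<Sum>j\<in>J. dl j * X0 i j) = (\<Sum>j\<in>J. dl j * X i j)" if "i \<in> S" for i
  proof (rule sum.cong[OF refl])
    fix j assume "j \<in> J"
    then show "dl j * X0 i j = dl j * X i j"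
      using keep[OF that] assms(3) by (cases "dl j = 0") force+
  qed
  moreover have "(\<Sum>i\<in>S. X0 i j) = (\<Sum>i\<in>S. X i j)" if "j \<in> J" "dl j \<noteq> t" for j
    using keep[OF _ that(1)] that(2) assms(3) \<open>j \<in> J\<close> by (intro sum.cong) force+
  then have "threshold_fill J dl (\<lambda>_. 1) t (\<lambda>j. \<Sum>i\<in>S. X0 i j)"
    using fill unfolding threshold_fill_def by auto
  ultimately show ?thesis using X0_sum by blast
qed

lemma attains_threshold_bound_insert:
  fixes r :: "'a \<Rightarrow> real"
  assumes "finite S" "finite J" "i \<notin> S" "\<forall>j\<in>J. 0 \<le> dl j" "\<forall>i'\<in>insert i S. 0 \<le> r i'"
    and card: "sum r (insert i S) \<le> card J"
    and attains: "attains_threshold_bound J dl r S X"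
  shows "\<exists>X'. attains_threshold_bound J dl r (insert i S) X'
           \<and> (\<forall>i'\<in>S. (\<Sum>j\<in>J. dl j * X' i' j) = (\<Sum>j\<in>J. dl j * X i' j))"
proof -
  obtain t where t: "0 \<le> t" and feasible: "single_type_feasible J r S X"
    and bound: "(\<Sum>j\<in>J. dl j * (\<Sum>i'\<in>S. X i' j)) = threshold_bound J dl (sum r S) t"
    using attains unfolding attains_threshold_bound_def by blast
  have "threshold_fill J dl (\<lambda>_. 1) t (\<lambda>j. \<Sum>i'\<in>S. X i' j)
      \<and> (0 < t \<longrightarrow> (\<Sum>j\<in>J. \<Sum>i'\<in>S. X i' j) = sum r S)"
    using bound delay_eq_threshold_bound_iff[OF assms(2) single_type_feasible_load[OF feasible] t]
    by blast
  then obtain X0 where feasible0: "single_type_feasible J r S X0"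
    and X0_sum: "\<forall>i'\<in>S. sum (X0 i') J = r i'"
    and X0_delay: "\<forall>i'\<in>S. (\<Sum>j\<in>J. dl j * X0 i' j) = (\<Sum>j\<in>J. dl j * X i' j)"
    and fill0: "threshold_fill J dl (\<lambda>_. 1) t (\<lambda>j. \<Sum>i'\<in>S. X0 i' j)"
    using threshold_allocation_rescale[OF assms(1,2,4) _ feasible] assms(5) by blast
  define y0 where "y0 j = (\<Sum>i'\<in>S. X0 i' j)" for j
  have y0: "\<forall>j\<in>J. 0 \<le> y0 j \<and> y0 j \<le> 1"
    unfolding y0_def by (rule single_type_feasible_load(1)[OF feasible0])
  have sum_y0: "sum y0 J = sum r S"
    unfolding y0_def using X0_sum sum.swap[of X0 J S] by simp
  have sum_insert: "sum r (insert i S) = r i + sum r S"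
    using assms(1,3) by simp
  obtain z \<tau> where "t \<le> \<tau>" and z: "\<forall>j\<in>J. 0 \<le> z j \<and> z j + y0 j \<le> 1" and sum_z: "sum z J = r i"
    and fill: "threshold_fill J dl (\<lambda>_. 1) \<tau> (\<lambda>j. z j + y0 j)"
    using threshold_fill_extend[OF assms(2) y0, of dl t "r i"] fill0 assms(5) card sum_y0 sum_insert
    unfolding y0_def by auto
  define X' where "X' = X0(i := z)"
  have X'_S: "X' i' = X0 i'" if "i' \<in> S" for i' using that assms(3) unfolding X'_def by auto
  have load': "(\<Sum>i'\<in>insert i S. X' i' j) = z j + y0 j" for j
    using assms(1,3) X'_S unfolding y0_def by (simp add: X'_def)
  have "single_type_feasible J r (insert i S) X'"
    using feasible0 z sum_z load' X'_S unfolding single_type_feasible_def by (auto simp: X'_def)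
  moreover have "(\<Sum>j\<in>J. dl j * (\<Sum>i'\<in>insert i S. X' i' j)) = threshold_bound J dl (sum r (insert i S)) \<tau>"
    using delay_eq_threshold_bound_iff[OF assms(2), of "\<lambda>j. z j + y0 j" "sum r (insert i S)" \<tau> dl]
      fill y0 z sum_z sum_y0 sum_insert \<open>t \<le> \<tau>\<close> t unfolding load' by (auto simp: sum.distrib)
  ultimately have "attains_threshold_bound J dl r (insert i S) X'"
    using t \<open>t \<le> \<tau>\<close> unfolding attains_threshold_bound_def by (meson order.trans)
  then show ?thesis using X0_delay X'_S by auto
qed

definition attains_bound ::
  "nat \<Rightarrow> (nat \<Rightarrow> 'm set) \<Rightarrow> ('a \<Rightarrow> nat \<Rightarrow> real) \<Rightarrow> ('m \<Rightarrow> nat \<Rightarrow> real) \<Rightarrow> 'a set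
     \<Rightarrow> ('a \<Rightarrow> 'm \<Rightarrow> nat \<Rightarrow> real) \<Rightarrow> bool" where
  "attains_bound d M r dl S X \<longleftrightarrow>
     (\<forall>k<d. attains_threshold_bound (M k) (\<lambda>j. dl j k) (\<lambda>i. r i k) S (\<lambda>i j. X i j k))"

lemma feasible_for_iff_single_type:
  "feasible_for d M r S X \<longleftrightarrow> (\<forall>k<d. single_type_feasible (M k) (\<lambda>i. r i k) S (\<lambda>i j. X i j k))"
  unfolding feasible_for_def nonneg_alloc_def satisfies_covering_def supply_respecting_def
    single_type_feasible_def by blast

lemma total_delay_by_type:
  "total_delay d M dl S X = (\<Sum>k<d. \<Sum>j\<in>M k. dl j k * (\<Sum>i\<in>S. X i j k))"
proof -
  have "total_delay d M dl S X = (\<Sum>k<d. \<Sum>i\<in>S. \<Sum>j\<in>M k. dl j k * X i j k)"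
    unfolding total_delay_def by (rule sum.swap)
  also have "\<dots> = (\<Sum>k<d. \<Sum>j\<in>M k. \<Sum>i\<in>S. dl j k * X i j k)"
    by (rule sum.cong[OF refl], rule sum.swap)
  finally show ?thesis by (simp add: sum_distrib_left)
qed

lemma jointly_optimal_if_attains_bound:
  assumes "attains_bound d M r dl S X"
  shows "jointly_optimal d M r dl S X"
  unfolding jointly_optimal_def
proof (intro conjI allI impI)
  show "feasible_for d M r S X"
    using assms unfolding attains_bound_def attains_threshold_bound_def feasible_for_iff_single_type
    by blast
  fix Y assume Y: "feasible_for d M r S Y"
  have "(\<Sum>j\<in>M k. dl j k * (\<Sum>i\<in>S. X i j k)) \<le> (\<Sum>j\<in>M k. dl j k * (\<Sum>i\<in>S. Y i j k))"
    if k: "k < d" for k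
  proof -
    obtain t where "0 \<le> t"
      and "(\<Sum>j\<in>M k. dl j k * (\<Sum>i\<in>S. X i j k)) = threshold_bound (M k) (\<lambda>j. dl j k) (\<Sum>i\<in>S. r i k) t"
      using assms k unfolding attains_bound_def attains_threshold_bound_def by blast
    moreover have "single_type_feasible (M k) (\<lambda>i. r i k) S (\<lambda>i j. Y i j k)"
      using Y k unfolding feasible_for_iff_single_type by blast
    ultimately show ?thesis using threshold_bound_le_single_type_delay by simp
  qed
  then show "total_delay d M dl S X \<le> total_delay d M dl S Y"
    unfolding total_delay_by_type by (rule sum_mono) simp
qed

lemma attains_bound_if_jointly_optimal:
  assumes optimal: "jointly_optimal d M r dl S X" and attains: "attains_bound d M r dl S Y"
  shows "attains_bound d M r dl S X"
proof -
  define cost where "cost Z k = (\<Sum>j\<in>M k. dl j k * (\<Sum>i\<in>S. Z i j k))" for Z k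
  have feasible: "feasible_for d M r S X"
    using optimal unfolding jointly_optimal_def by blast
  have bound_Y: "\<exists>t\<ge>0. cost Y k = threshold_bound (M k) (\<lambda>j. dl j k) (\<Sum>i\<in>S. r i k) t"
    if "k < d" for k
    using attains that unfolding attains_bound_def attains_threshold_bound_def cost_def by blast
  have le: "cost Y k \<le> cost X k" if k: "k \<in> {..<d}" for k
  proof -
    obtain t where "0 \<le> t" "cost Y k = threshold_bound (M k) (\<lambda>j. dl j k) (\<Sum>i\<in>S. r i k) t"
      using bound_Y k by auto
    moreover have "single_type_feasible (M k) (\<lambda>i. r i k) S (\<lambda>i j. X i j k)"
      using feasible k unfolding feasible_for_iff_single_type by blast
    ultimately show ?thesis unfolding cost_def using threshold_bound_le_single_type_delay by simp
  qed
  have "feasible_for d M r S Y"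
    using jointly_optimal_if_attains_bound[OF attains] unfolding jointly_optimal_def by blast
  then have "sum (cost X) {..<d} \<le> sum (cost Y) {..<d}"
    using optimal unfolding jointly_optimal_def total_delay_by_type cost_def by blast
  moreover have "sum (cost Y) {..<d} \<le> sum (cost X) {..<d}"
    using le by (rule sum_mono)
  ultimately have "sum (cost Y) {..<d} = sum (cost X) {..<d}" by linarith
  then have "cost X k = cost Y k" if "k < d" for k
    using sum_mono_inv[of "cost Y" "{..<d}" "cost X" k] le that by simp
  then have "\<exists>t\<ge>0. cost X k = threshold_bound (M k) (\<lambda>j. dl j k) (\<Sum>i\<in>S. r i k) t"
    if "k < d" for k
    using bound_Y that by simp
  then show ?thesis
    using feasible unfolding attains_bound_def attains_threshold_bound_def
      feasible_for_iff_single_type cost_def by blast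
qed

lemma attains_bound_insert:
  fixes r :: "'a \<Rightarrow> nat \<Rightarrow> real"
  assumes "finite S" "i \<notin> S" "\<forall>k<d. finite (M k)" "\<forall>k<d. \<forall>j\<in>M k. 0 \<le> dl j k"
    and "\<forall>i'\<in>insert i S. \<forall>k<d. 0 \<le> r i' k" "\<forall>k<d. (\<Sum>i'\<in>insert i S. r i' k) \<le> card (M k)"
    and "attains_bound d M r dl S X"
  shows "\<exists>X'. attains_bound d M r dl (insert i S) X'
           \<and> (\<forall>i'\<in>S. agent_delay d M dl X' i' = agent_delay d M dl X i')"
proof -
  have "\<forall>k. \<exists>Xk. k < d \<longrightarrow> attains_threshold_bound (M k) (\<lambda>j. dl j k) (\<lambda>i. r i k) (insert i S) Xk
      \<and> (\<forall>i'\<in>S. (\<Sum>j\<in>M k. dl j k * Xk i' j) = (\<Sum>j\<in>M k. dl j k * X i' j k))"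
  proof
    fix k
    show "\<exists>Xk. k < d \<longrightarrow> attains_threshold_bound (M k) (\<lambda>j. dl j k) (\<lambda>i. r i k) (insert i S) Xk
      \<and> (\<forall>i'\<in>S. (\<Sum>j\<in>M k. dl j k * Xk i' j) = (\<Sum>j\<in>M k. dl j k * X i' j k))"
    proof (cases "k < d")
      case True
      then show ?thesis
        using assms attains_threshold_bound_insert[of S "M k" i "\<lambda>j. dl j k" "\<lambda>i. r i k"]
        unfolding attains_bound_def by auto
    qed simp
  qed
  from choice[OF this] obtain F where F: "\<forall>k. k < d \<longrightarrow> attains_threshold_bound (M k) (\<lambda>j. dl j k) (\<lambda>i. r i k) (insert i S) (F k)
      \<and> (\<forall>i'\<in>S. (\<Sum>j\<in>M k. dl j k * F k i' j) = (\<Sum>j\<in>M k. dl j k * X i' j k))" ..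
  define X' where "X' i' j k = F k i' j" for i' j k
  have "attains_bound d M r dl (insert i S) X'"
    using F unfolding attains_bound_def X'_def by auto
  moreover have "agent_delay d M dl X' i' = agent_delay d M dl X i'" if "i' \<in> S" for i'
    unfolding agent_delay_def X'_def by (rule sum.cong[OF refl]) (use F that in simp)
  ultimately show ?thesis by blast
qed

lemma attains_bound_exists:
  fixes r :: "'a \<Rightarrow> nat \<Rightarrow> real"
  assumes "finite S" "\<forall>k<d. finite (M k)" "\<forall>k<d. \<forall>j\<in>M k. 0 \<le> dl j k"
    and "\<forall>i\<in>S. \<forall>k<d. 0 \<le> r i k" "\<forall>k<d. (\<Sum>i\<in>S. r i k) \<le> card (M k)"
  shows "\<exists>X. attains_bound d M r dl S X"
  using assms
proof (induction S rule: finite_induct)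
  case empty
  have "(\<Sum>j\<in>M k. min 0 (dl j k)) = 0" if "k < d" for k
    using empty.prems(2) that by simp
  then have "attains_bound d M r dl {} (\<lambda>_ _ _. 0)"
    unfolding attains_bound_def attains_threshold_bound_def single_type_feasible_def threshold_bound_def
    by auto
  then show ?case by blast
next
  case (insert i S)
  have "\<forall>k<d. (\<Sum>i'\<in>S. r i' k) \<le> card (M k)"
  proof (intro allI impI)
    fix k assume k: "k < d"
    have "(\<Sum>i'\<in>S. r i' k) \<le> (\<Sum>i'\<in>insert i S. r i' k)"
      using insert k by (intro sum_mono2) auto
    then show "(\<Sum>i'\<in>S. r i' k) \<le> card (M k)" using insert.prems(4) k by fastforce
  qed
  then obtain X where "attains_bound d M r dl S X" using insert by blast
  then show ?case using attains_bound_insert[of S i d M dl r X] insert by blast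
qed

theorem lemmaD1:
  fixes d :: nat and M :: "nat \<Rightarrow> 'm set" and A :: "'a set"
    and r :: "'a \<Rightarrow> nat \<Rightarrow> real" and dl :: "'m \<Rightarrow> nat \<Rightarrow> real"
  assumes "finite A"
    and "\<forall>k<d. finite (M k)"
    and "\<forall>i\<in>A. \<forall>k<d. r i k \<ge> 0"
    and "\<forall>k<d. \<forall>j\<in>M k. dl j k \<ge> 0"
    and "\<forall>k<d. real (card (M k)) \<ge> (\<Sum>i\<in>A. r i k)"
  shows "extensibility d M r dl A"
  unfolding extensibility_def
proof (intro allI impI)
  fix S X i
  assume S: "S \<subseteq> A" and optimal: "jointly_optimal d M r dl S X" and i: "i \<in> A - S"
  have finite_S: "finite S" using finite_subset[OF S assms(1)] .
  have demand: "\<forall>k<d. (\<Sum>i'\<in>T. r i' k) \<le> card (M k)" if "T \<subseteq> A" for T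
  proof (intro allI impI)
    fix k assume k: "k < d"
    have "(\<Sum>i'\<in>T. r i' k) \<le> (\<Sum>i'\<in>A. r i' k)"
      using that assms(1,3) k by (intro sum_mono2) auto
    then show "(\<Sum>i'\<in>T. r i' k) \<le> card (M k)" using assms(5) k by fastforce
  qed
  obtain Y where "attains_bound d M r dl S Y"
    using attains_bound_exists[OF finite_S assms(2,4)] demand[OF S] S assms(3) by blast
  then have "attains_bound d M r dl S X"
    by (rule attains_bound_if_jointly_optimal[OF optimal])
  then obtain X' where "attains_bound d M r dl (insert i S) X'"
    and "\<forall>i'\<in>S. agent_delay d M dl X' i' = agent_delay d M dl X i'"
    using attains_bound_insert[OF finite_S _ assms(2,4)] demand[of "insert i S"] S i assms(3) by blast
  then show "\<exists>X'. jointly_optimal d M r dl (insert i S) X'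
      \<and> (\<forall>i'\<in>S. agent_delay d M dl X' i' = agent_delay d M dl X i')"
    using jointly_optimal_if_attains_bound by blast
qed

end
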